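(* Let $q$ be a prime power, and let $\mu_{q+1}$ denote the group of all $(q+1)$-th roots of unity in $\mathbb{F}_{q^2}$. Pick an integer $v$ and a polynomial $D(X)\in\mathbb{F}_{q^2}[X]$ such that the function $c\mapsto c^v D(c)^{q-1}$ permutes $\mu_{q+1}$. Let $m$ be a nonnegative integer, and let $s_1,\dots,s_m$ and $t_1,\dots,t_m$ be positive integers such that for each $i$ we have $\gcd(s_i+1,q)=1$ and $(q+1)/\gcd(t_i,q+1)$ is coprime to $s_i+1$. (1) If $r$ is a positive integer such that $\gcd(r,q-1)=1$ and $r\equiv v+\sum_{i=1}^m s_it_i\pmod{q+1}$, then $X^r B(X^{q-1})$ permutes $\mathbb{F}_{q^2}$, where $B(X):=D(X)\prod_{i=1}^m \sum_{j=0}^{s_i} X^{jt_i}$. (2) If $B(X)\in\mathbb{F}_{q^2}[X]$ satisfies $D(X)=B(X)\prod_{i=1}^m\sum_{j=0}^{s_i} X^{jt_i}$, and $r$ is a positive integer such that $\gcd(r,q-1)=1$ and $r\equiv v-\sum_{i=1}^m s_it_i\pmod{q+1}$, then $X^r B(X^{q-1})$ permutes $\mathbb{F}_{q^2}$.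
   Context: A polynomial $f(X)\in\mathbb{F}_{q^2}[X]$ is said to permute $\mathbb{F}_{q^2}$ (be a permutation polynomial) if the map $c\mapsto f(c)$ is a bijection of $\mathbb{F}_{q^2}$. For a polynomial $g$ (or expression $X^vD(X)^{q-1}$, which for $c\in\mu_{q+1}$ is well defined even if $v$ is negative), "permutes $\mu_{q+1}$" means that $c\mapsto g(c)$ maps $\mu_{q+1}$ bijectively onto itself. *)

theory Defs
  imports "HOL-Computational_Algebra.Computational_Algebra" "HOL-Number_Theory.Cong" "HOL-Library.Cardinality"
begin

definition prime_power :: "nat \<Rightarrow> bool" where
  "prime_power q \<longleftrightarrow> (\<exists>p k. prime p \<and> k > 0 \<and> q = p ^ k)"

definition roots_of_unity :: "nat \<Rightarrow> 'a::field set" where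
  "roots_of_unity n = {c. c ^ n = 1}"

definition geom_poly :: "nat \<Rightarrow> nat \<Rightarrow> 'a::comm_ring_1 poly" where
  "geom_poly s t = (\<Sum>j\<in>{0..s}. monom 1 (j * t))"

end

theory Submission
  imports Defs "HOL-Number_Theory.Residues"
begin

text \<open>
  By the criterion of Park--Lee, Wang and Zieve, \<open>X\<^sup>r h(X\<^sup>q\<^sup>-\<^sup>1)\<close> permutes the field
  with \<open>q\<^sup>2\<close> elements when \<open>gcd(r, q - 1) = 1\<close> and \<open>c \<mapsto> c\<^sup>r h(c)\<^sup>q\<^sup>-\<^sup>1\<close> permutes
  \<open>\<mu>\<^sub>q\<^sub>+\<^sub>1\<close>; there the exponent \<open>r\<close> only matters modulo \<open>q + 1\<close>.
  The key computation is that \<open>G(X) = \<Sum>\<^sub>j\<^sub>\<le>\<^sub>s X\<^sup>j\<^sup>t\<close> satisfies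
  \<open>G(c)\<^sup>q\<^sup>-\<^sup>1 = c\<^sup>-\<^sup>s\<^sup>t\<close> on \<open>\<mu>\<^sub>q\<^sub>+\<^sub>1\<close>. With \<open>y = c\<^sup>t\<close>, either \<open>y = 1\<close> and
  \<open>G(c) = s + 1\<close> is a nonzero element of the prime field, or \<open>y \<noteq> 1\<close>, \<open>y\<^sup>s\<^sup>+\<^sup>1 \<noteq> 1\<close>
  (the order of \<open>y\<close> divides \<open>(q + 1)/gcd(t, q + 1)\<close>, which is coprime to \<open>s + 1\<close>) and
  \<open>G(c) = (y\<^sup>s\<^sup>+\<^sup>1 - 1)/(y - 1)\<close>, where \<open>(z - 1)\<^sup>q\<^sup>-\<^sup>1 = -z\<^sup>-\<^sup>1\<close> for every
  \<open>z \<in> \<mu>\<^sub>q\<^sub>+\<^sub>1 - {1}\<close>. So multiplying \<open>D\<close> by the product of these factors, or dividing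
  it out, shifts the exponent \<open>v\<close> by \<open>\<plusminus>\<Sum>\<^sub>i s\<^sub>i t\<^sub>i\<close>.
\<close>

lemma power_eq_1_if_coprime_exponents:
  fixes u :: "'a::monoid_mult"
  assumes "u ^ a = 1" "u ^ b = 1" "coprime a b"
  shows "u = 1"
proof (cases "a = 0")
  case True
  then show ?thesis using assms by simp
next
  case False
  obtain x y where "a * x = b * y + gcd a b"
    using bezout_nat[OF False] by blast
  then have "a * x = b * y + 1" using assms(3) by simp
  then have "u ^ (a * x) = u ^ (b * y) * u" by (simp add: power_commutes)
  then show ?thesis using assms by (simp add: power_mult)
qed

lemma power_power_div_gcd_eq_1:
  fixes c :: "'a::monoid_mult"
  assumes "c ^ n = 1"
  shows "(c ^ t) ^ (n div gcd t n) = 1"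
proof -
  have "t * (n div gcd t n) = lcm t n"
    by (simp add: lcm_nat_def div_mult_swap)
  moreover obtain j where "lcm t n = n * j" by (metis dvd_lcm2 dvdE)
  ultimately show ?thesis using assms by (simp add: power_mult [symmetric] power_mult)
qed

lemma power_int_cong:
  fixes c :: "'a::field"
  assumes "c ^ n = 1" "[a = b] (mod int n)"
  shows "c powi a = c powi b"
proof (cases "n = 0")
  case True
  then show ?thesis using assms(2) by simp
next
  case False
  then have "c \<noteq> 0" using assms(1) by (auto simp: zero_power)
  obtain j where "a = b + int n * j"
    using assms(2) by (metis cong_iff_lin cong_sym)
  then have "c powi a = c powi b * (c powi int n) powi j"
    using \<open>c \<noteq> 0\<close> by (simp add: power_int_add power_int_mult)
  then show ?thesis using assms(1) by simp
qed

lemma poly_geom_poly: "poly (geom_poly s t) c = (\<Sum>j<Suc s. (c ^ t) ^ j)"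
  unfolding geom_poly_def
  by (simp add: poly_sum poly_monom atLeast0AtMost lessThan_Suc_atMost mult.commute
      flip: power_mult)

lemma power_card_minus_one_eq_1:
  fixes x :: "'a::{finite,field}"
  assumes "x \<noteq> 0"
  shows "x ^ (CARD('a) - 1) = 1"
proof -
  have "x ^ (CARD('a) - 1) * \<Prod>(UNIV - {0::'a}) = (\<Prod>y\<in>UNIV - {0::'a}. x * y)"
    by (simp add: prod.distrib mult_ac)
  also have "\<dots> = \<Prod>(UNIV - {0::'a})"
    by (rule prod.reindex_bij_witness[of _ "\<lambda>y. y / x" "\<lambda>y. x * y"]) (use assms in auto)
  finally show ?thesis by simp
qed

lemma mult_eq_CARD_pred_imp_pos:
  assumes "e * n = CARD('a::{finite,zero_neq_one}) - 1"
  shows "e > 0" "n > 0"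
proof -
  have "card {0, 1::'a} \<le> CARD('a)" by (rule card_mono) auto
  then have "e * n > 0" using assms by simp
  then show "e > 0" "n > 0" by simp_all
qed

lemma CHAR_power_if_card_eq_prime_power:
  assumes "prime_power q" and card: "CARD('a::{finite,field}) = q ^ n" and "n > 0"
  shows "\<exists>k>0. q = CHAR('a) ^ k"
proof -
  obtain p k where p: "prime p" "k > 0" "q = p ^ k"
    using assms(1) unfolding prime_power_def by blast
  have prime_CHAR: "prime CHAR('a)"
    by (intro prime_CHAR_semidom finite_imp_CHAR_pos) simp
  have "CHAR('a) dvd p ^ (k * n)"
    using CHAR_dvd_CARD[where 'a='a] card p(3) by (simp add: power_mult)
  then have "CHAR('a) = p"
    using prime_CHAR p(1) by (metis prime_dvd_power primes_dvd_imp_eq)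
  then show ?thesis using p by blast
qed

theorem bij_power_poly_if_bij_betw_roots_of_unity:
  fixes h :: "'a::{finite,field} poly"
  assumes card: "e * n = CARD('a) - 1" and r: "r > 0" "coprime r e"
    and perm: "bij_betw (\<lambda>c. c ^ r * poly h c ^ e) (roots_of_unity n) (roots_of_unity n)"
  shows "bij (\<lambda>c. c ^ r * poly h (c ^ e))"
proof -
  let ?f = "\<lambda>c. c ^ r * poly h (c ^ e)" and ?g = "\<lambda>c. c ^ r * poly h c ^ e"
  have "e > 0" "n > 0" using mult_eq_CARD_pred_imp_pos[OF card] by simp_all
  have root: "x ^ e \<in> roots_of_unity n" if "x \<noteq> 0" for x :: 'a
    using power_card_minus_one_eq_1[OF that] card
    unfolding roots_of_unity_def by (simp flip: power_mult)
  have h_nonzero: "poly h z \<noteq> 0" if "z \<in> roots_of_unity n" for z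
  proof
    assume "poly h z = 0"
    then have "?g z = 0" using \<open>e > 0\<close> by simp
    moreover have "?g z \<in> roots_of_unity n" using perm that bij_betwE by blast
    ultimately have "(0::'a) \<in> roots_of_unity n" by metis
    then show False using \<open>n > 0\<close> by (simp add: roots_of_unity_def zero_power)
  qed
  have f_zero_iff: "?f x = 0 \<longleftrightarrow> x = 0" for x
    using r(1) h_nonzero[OF root] by auto
  have f_power: "?f x ^ e = ?g (x ^ e)" for x
    by (simp add: power_mult_distrib flip: power_mult) (simp add: mult.commute)
  have "x = y" if "?f x = ?f y" for x y
  proof (cases "x = 0 \<or> y = 0")
    case True
    then show ?thesis using that f_zero_iff by metis
  next
    case False
    then have "x ^ e = y ^ e"
      using inj_onD[OF bij_betw_imp_inj_on[OF perm]] root f_power that by metis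
    moreover from this have "x ^ r = y ^ r"
      using that h_nonzero[OF root] False by auto
    ultimately have "(x / y) ^ r = 1" "(x / y) ^ e = 1"
      using False by (simp_all add: power_divide)
    then have "x / y = 1" using power_eq_1_if_coprime_exponents r(2) by blast
    then show ?thesis using False by simp
  qed
  then show ?thesis by (simp add: bij_def finite_UNIV_inj_surj injI)
qed

lemma bij_betw_roots_of_unity_power_int_cong:
  fixes f :: "'a::field \<Rightarrow> 'a"
  assumes "[a = b] (mod int n)"
  shows "bij_betw (\<lambda>c. c powi a * f c) (roots_of_unity n) A
    \<longleftrightarrow> bij_betw (\<lambda>c. c powi b * f c) (roots_of_unity n) A"
proof (rule bij_betw_cong)
  fix c :: 'a assume "c \<in> roots_of_unity n"
  then have "c powi a = c powi b"
    using assms by (intro power_int_cong) (simp_all add: roots_of_unity_def)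
  then show "c powi a * f c = c powi b * f c" by simp
qed

lemma bij_betw_roots_of_unity_mult_factor:
  fixes D P :: "'a::field poly"
  assumes P: "\<forall>c\<in>roots_of_unity n. poly P c ^ e * c ^ u = 1"
  shows "bij_betw (\<lambda>c. c powi (v + int u) * poly (D * P) c ^ e) (roots_of_unity n) A
    \<longleftrightarrow> bij_betw (\<lambda>c. c powi v * poly D c ^ e) (roots_of_unity n) A"
proof (rule bij_betw_cong)
  fix c :: 'a assume c: "c \<in> roots_of_unity n"
  have "c powi (v + int u) = c powi v * c ^ u"
  proof (cases "c = 0")
    case True
    then have "u = 0" using P c by (cases u) auto
    then show ?thesis by simp
  qed (simp add: power_int_add)
  then have "c powi (v + int u) * poly (D * P) c ^ e
      = c powi v * poly D c ^ e * (poly P c ^ e * c ^ u)"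
    by (simp add: power_mult_distrib mult_ac)
  then show "c powi (v + int u) * poly (D * P) c ^ e = c powi v * poly D c ^ e"
    using P c by simp
qed

context
  fixes q k :: nat
  assumes prime_CHAR: "prime CHAR('a::field)" and q_eq: "q = CHAR('a) ^ k" and "k > 0"
begin

lemma CHAR_power_gt_0: "q > 0"
  using q_eq prime_CHAR by (simp add: prime_gt_0_nat)

lemma of_nat_power_pred_eq_1:
  assumes "coprime n q"
  shows "(of_nat n :: 'a) ^ (q - 1) = 1"
proof -
  have "(of_nat n :: 'a) ^ q = of_nat n"
    using freshmans_dream_sum'[OF prime_CHAR q_eq, of "\<lambda>_. 1" "{..<n}"] by simp
  then have "(of_nat n :: 'a) ^ (q - 1) * of_nat n = 1 * of_nat n"
    using CHAR_power_gt_0 by (cases q) (simp_all add: mult.commute)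
  moreover have "(of_nat n :: 'a) \<noteq> 0"
  proof
    assume "(of_nat n :: 'a) = 0"
    then have "CHAR('a) dvd gcd n q"
      using q_eq \<open>k > 0\<close> by (simp add: of_nat_eq_0_iff_char_dvd)
    then show False using assms prime_CHAR by simp
  qed
  ultimately show ?thesis by simp
qed

text \<open>For \<open>z\<close> in \<open>\<mu>\<^sub>q\<^sub>+\<^sub>1\<close> the Frobenius gives \<open>(z - 1)\<^sup>q = z\<^sup>q - 1 = z\<^sup>-\<^sup>1 - 1\<close>.\<close>

lemma diff_one_power_pred_mult_eq_minus_one:
  fixes z :: 'a
  assumes "z ^ (q + 1) = 1" "z \<noteq> 1"
  shows "(z - 1) ^ (q - 1) * z = -1"
proof -
  have "z ^ q = (z - 1) ^ q + 1"
    using freshmans_dream'[OF prime_CHAR q_eq, of "z - 1" 1] by simp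
  then have "(z - 1) ^ q * z = 1 - z"
    using assms(1) by (simp add: algebra_simps)
  also have "(z - 1) ^ q = (z - 1) ^ (q - 1) * (z - 1)"
    using CHAR_power_gt_0 by (cases q) (simp_all add: mult.commute)
  finally have "((z - 1) ^ (q - 1) * z) * (z - 1) = -1 * (z - 1)"
    by (simp add: algebra_simps)
  moreover have "z - 1 \<noteq> 0" using assms(2) by simp
  ultimately show ?thesis using mult_right_cancel by blast
qed

lemma poly_geom_poly_power_pred:
  fixes c :: 'a
  assumes c: "c ^ (q + 1) = 1" and s: "coprime (s + 1) q"
    and t: "coprime ((q + 1) div gcd t (q + 1)) (s + 1)"
  shows "poly (geom_poly s t) c ^ (q - 1) * c ^ (s * t) = 1"
proof -
  define y where "y = c ^ t"
  have root_y: "y ^ (q + 1) = 1"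
    unfolding y_def using c by (metis power_mult mult.commute power_one)
  have G: "poly (geom_poly s t) c = (\<Sum>j<Suc s. y ^ j)"
    unfolding y_def by (rule poly_geom_poly)
  have cst: "c ^ (s * t) = y ^ s"
    by (simp add: y_def mult.commute flip: power_mult)
  show ?thesis
  proof (cases "y = 1")
    case True
    then show ?thesis using G cst of_nat_power_pred_eq_1[OF s] by simp
  next
    case False
    define w where "w = y ^ (s + 1)"
    have root_w: "w ^ (q + 1) = 1"
      unfolding w_def using root_y by (metis power_mult mult.commute power_one)
    have "w \<noteq> 1"
    proof
      assume "w = 1"
      moreover have "y ^ ((q + 1) div gcd t (q + 1)) = 1"
        unfolding y_def using c by (rule power_power_div_gcd_eq_1)
      ultimately have "y = 1"
        using power_eq_1_if_coprime_exponents t unfolding w_def by (metis coprime_commute)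
      with False show False ..
    qed
    have "poly (geom_poly s t) c * (y - 1) = w - 1"
      unfolding G w_def using power_diff_1_eq[of y "Suc s"] by (simp add: mult.commute)
    then have "poly (geom_poly s t) c ^ (q - 1) * (y - 1) ^ (q - 1) = (w - 1) ^ (q - 1)"
      by (metis power_mult_distrib)
    then have "(poly (geom_poly s t) c ^ (q - 1) * y ^ s) * ((y - 1) ^ (q - 1) * y)
        = (w - 1) ^ (q - 1) * w"
      unfolding w_def by (simp add: algebra_simps)
    moreover have "(y - 1) ^ (q - 1) * y = -1"
      using root_y False by (rule diff_one_power_pred_mult_eq_minus_one)
    moreover have "(w - 1) ^ (q - 1) * w = -1"
      using root_w \<open>w \<noteq> 1\<close> by (rule diff_one_power_pred_mult_eq_minus_one)
    ultimately show ?thesis using cst by simp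
  qed
qed

lemma poly_prod_geom_poly_power_pred:
  assumes "\<forall>i<m. coprime (s i + 1) q"
    and "\<forall>i<m. coprime ((q + 1) div gcd (t i) (q + 1)) (s i + 1)"
  shows "\<forall>c::'a\<in>roots_of_unity (q + 1).
    poly (\<Prod>i<m. geom_poly (s i) (t i)) c ^ (q - 1) * c ^ (\<Sum>i<m. s i * t i) = 1"
  using poly_geom_poly_power_pred assms
  by (simp add: roots_of_unity_def poly_prod prod_power_distrib power_sum flip: prod.distrib)

end

theorem corollary3:
  fixes q :: nat and v :: int and D :: "'a::{finite,field} poly"
    and m :: nat and s t :: "nat \<Rightarrow> nat"
  assumes q: "prime_power q"
    and card: "CARD('a) = q ^ 2"
    and Dperm: "bij_betw (\<lambda>c. c powi v * poly D c ^ (q - 1))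
                  (roots_of_unity (q + 1)) (roots_of_unity (q + 1))"
    and s_pos: "\<forall>i<m. s i > 0" and t_pos: "\<forall>i<m. t i > 0"
    and gcd1: "\<forall>i<m. gcd (s i + 1) q = 1"
    and cop: "\<forall>i<m. coprime ((q + 1) div gcd (t i) (q + 1)) (s i + 1)"
  shows
    "(\<forall>r::nat. r > 0 \<longrightarrow> coprime r (q - 1) \<longrightarrow>
        [int r = v + (\<Sum>i<m. int (s i * t i))] (mod int (q + 1)) \<longrightarrow>
        (let B = D * (\<Prod>i<m. geom_poly (s i) (t i)) in
           bij (\<lambda>c::'a. c ^ r * poly B (c ^ (q - 1)))))
     \<and>
     (\<forall>(B :: 'a poly) (r::nat). D = B * (\<Prod>i<m. geom_poly (s i) (t i)) \<longrightarrow>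
        r > 0 \<longrightarrow> coprime r (q - 1) \<longrightarrow>
        [int r = v - (\<Sum>i<m. int (s i * t i))] (mod int (q + 1)) \<longrightarrow>
        bij (\<lambda>c::'a. c ^ r * poly B (c ^ (q - 1))))"
proof -
  let ?\<mu> = "roots_of_unity (q + 1) :: 'a set"
  obtain k where k: "k > 0" "q = CHAR('a) ^ k"
    using CHAR_power_if_card_eq_prime_power[OF q card] by auto
  have prime_CHAR: "prime CHAR('a)"
    by (intro prime_CHAR_semidom finite_imp_CHAR_pos) simp
  have card_pred: "(q - 1) * (q + 1) = CARD('a) - 1"
    using card by (simp add: power2_eq_square algebra_simps diff_mult_distrib)
  have bij: "bij (\<lambda>c. c ^ r * poly h (c ^ (q - 1)))"
    if "r > 0" "coprime r (q - 1)" "[int r = a] (mod int (q + 1))"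
      and "bij_betw (\<lambda>c. c powi a * poly h c ^ (q - 1)) ?\<mu> ?\<mu>" for r a h
    using bij_betw_roots_of_unity_power_int_cong[OF that(3), THEN iffD2, OF that(4)]
    unfolding power_int_of_nat
    by (rule bij_power_poly_if_bij_betw_roots_of_unity[OF card_pred that(1,2)])
  define S where "S = (\<Sum>i<m. s i * t i)"
  define P :: "'a poly" where "P = (\<Prod>i<m. geom_poly (s i) (t i))"
  have P: "\<forall>c\<in>?\<mu>. poly P c ^ (q - 1) * c ^ S = 1"
    using poly_prod_geom_poly_power_pred[OF prime_CHAR k(2) k(1)] gcd1 cop
    unfolding P_def S_def by (simp add: coprime_iff_gcd_eq_1)
  have S: "(\<Sum>i<m. int (s i * t i)) = int S"
    unfolding S_def by (simp add: of_nat_sum)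
  show ?thesis
    unfolding P_def [symmetric] S Let_def
  proof (intro conjI allI impI)
    fix r assume r: "r > 0" "coprime r (q - 1)" "[int r = v + int S] (mod int (q + 1))"
    from Dperm have "bij_betw (\<lambda>c. c powi (v + int S) * poly (D * P) c ^ (q - 1)) ?\<mu> ?\<mu>"
      by (rule bij_betw_roots_of_unity_mult_factor[OF P, THEN iffD2])
    then show "bij (\<lambda>c. c ^ r * poly (D * P) (c ^ (q - 1)))" by (rule bij[OF r])
  next
    fix B r assume D: "D = B * P"
      and r: "r > 0" "coprime r (q - 1)" "[int r = v - int S] (mod int (q + 1))"
    have "bij_betw (\<lambda>c. c powi (v - int S) * poly B c ^ (q - 1)) ?\<mu> ?\<mu>"
      using bij_betw_roots_of_unity_mult_factor[OF P, of "v - int S" B] Dperm D by simp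
    then show "bij (\<lambda>c. c ^ r * poly B (c ^ (q - 1)))" by (rule bij[OF r])
  qed
qed

end
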